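(* Every D-finite power series $f\in\mathbb{C}[[x]]$ is eventually stable: there exists $m\in\mathbb{N}$ such that $\mathrm{int}^m(f)$ is stable.
   Context: Let $\delta=d/dx$ on $\mathbb{C}[[x]]$ and $\mathbb{C}(x)$, and let $\mathbb{C}(x)\langle D\rangle$ be the ring of linear differential operators $\sum_i \ell_i D^i$ ($\ell_i\in\mathbb{C}(x)$) acting by $D(h)=\delta(h)$, with $D\cdot r=r\cdot D+\delta(r)$. A power series $h\in\mathbb{C}[[x]]$ is D-finite if some nonzero $L\in\mathbb{C}(x)\langle D\rangle$ (an annihilator) satisfies $L(h)=0$; its minimal annihilator is a nonzero annihilator of least order. For $h=\sum_{n\ge0}a_nx^n$, the formal integral is $\mathrm{int}(h)=\sum_{n\ge1}\frac{a_{n-1}}{n}x^n$, and $\mathrm{int}^m$ is its $m$-fold iterate. A D-finite power series $h$ is stable if there is a sequence $(g_i)_{i\in\mathbb{N}}$ in $\mathbb{C}[[x]]$ with $g_0=h$, $g_i=\delta(g_{i+1})$ for all $i$, and all $g_i$ have (minimal) annihilators of the same order. *)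

theory Defs
  imports "HOL-Computational_Algebra.Computational_Algebra"
begin

text \<open>A rational function p/q in C(x) (q nonzero), viewed inside the field of
formal Laurent series C((x)), which contains C[[x]].\<close>
definition rat_fls :: "complex poly \<Rightarrow> complex poly \<Rightarrow> complex fls" where
  "rat_fls p q = fps_to_fls (fps_of_poly p) / fps_to_fls (fps_of_poly q)"

definition has_annihilator_of_order :: "complex fps \<Rightarrow> nat \<Rightarrow> bool" where
  "has_annihilator_of_order h r \<longleftrightarrow>
     (\<exists>p q :: nat \<Rightarrow> complex poly.
        (\<forall>i\<le>r. q i \<noteq> 0) \<and> p r \<noteq> 0 \<and>
        (\<Sum>i\<le>r. rat_fls (p i) (q i) * fps_to_fls ((fps_deriv ^^ i) h)) = 0)"

definition dfinite :: "complex fps \<Rightarrow> bool" where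
  "dfinite h \<longleftrightarrow> (\<exists>r. has_annihilator_of_order h r)"

definition dfinite_order :: "complex fps \<Rightarrow> nat" where
  "dfinite_order h = (LEAST r. has_annihilator_of_order h r)"

definition fps_int :: "complex fps \<Rightarrow> complex fps" where
  "fps_int h = Abs_fps (\<lambda>n. if n = 0 then 0 else fps_nth h (n - 1) / of_nat n)"

definition stable :: "complex fps \<Rightarrow> bool" where
  "stable h \<longleftrightarrow> dfinite h \<and>
     (\<exists>g :: nat \<Rightarrow> complex fps. g 0 = h \<and> (\<forall>i. g i = fps_deriv (g (Suc i))) \<and>
        (\<forall>i. dfinite (g i) \<and> dfinite_order (g i) = dfinite_order h))"

end

theory Submission
  imports Defs
begin

(*
  Let L = sum_{i<=r} l_i D^i, with polynomial coefficients, annihilate f.  All iterated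
  integrals int^m f lie in one finitely generated C[x]-submodule of C[[x]], spanned by
  f, f', ..., f^(r), 1 and int(x^k f) for k < N.  It is closed under int: integrating by
  parts j times gives int(u f^(j)) = (-1)^j int(u^(j) f) modulo f, ..., f^(j-1), 1; summed
  over the terms of L this puts int(L*(q) f) into the module, L* being the formal adjoint,
  and since L* takes values of every large enough degree, int(p f) lies in it for every
  polynomial p.  In a module with n generators over the domain C[x], any n+1 elements are
  linearly dependent; for the derivatives int^m f, int^(m-1) f, ..., int^(m-n) f of int^m f
  this bounds its minimal order by n.  Differentiation does not raise the minimal order, so
  the orders of int^m f increase with m; being bounded, they are eventually constant, and
  from then on int^m f is stable.
*)

section \<open>Linear dependence and polynomials\<close>

lemma module_span_card_dependent:
  fixes scale :: "'a::idom \<Rightarrow> 'b::ab_group_add \<Rightarrow> 'b"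
  assumes "module scale" and "finite B" and "finite I" and "card B < card I"
    and "\<forall>i\<in>I. v i \<in> module.span scale B"
  shows "\<exists>c. (\<exists>i\<in>I. c i \<noteq> 0) \<and> (\<Sum>i\<in>I. scale (c i) (v i)) = 0"
  using assms(2-5)
proof (induction B arbitrary: I v rule: finite_induct)
  case empty
  interpret module scale by fact
  have "I \<noteq> {}" "\<forall>i\<in>I. v i = 0" using empty by auto
  then show ?case by (intro exI[of _ "\<lambda>_. 1"]) auto
next
  case (insert b B)
  interpret module scale by fact
  have "\<forall>i\<in>I. \<exists>a. v i - scale a b \<in> span B"
    using insert.prems(3) span_insert by blast
  then obtain a where a: "\<And>i. i \<in> I \<Longrightarrow> v i - scale (a i) b \<in> span B" by metis
  show ?case
  proof (cases "\<forall>i\<in>I. a i = 0")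
    case True
    then show ?thesis using a insert.hyps insert.prems insert.IH[of I v] by simp
  next
    case False
    then obtain i0 where i0: "i0 \<in> I" "a i0 \<noteq> 0" by blast
    define u where "u j = scale (a i0) (v j) - scale (a j) (v i0)" for j
    have "u j \<in> span B" if "j \<in> I" for j
    proof -
      have "u j = scale (a i0) (v j - scale (a j) b) - scale (a j) (v i0 - scale (a i0) b)"
        by (simp add: u_def scale_right_diff_distrib mult.commute)
      then show ?thesis using a that i0 by (simp add: span_diff span_scale)
    qed
    moreover have "card B < card (I - {i0})" using insert i0 by simp
    ultimately obtain c' where c': "\<exists>i\<in>I - {i0}. c' i \<noteq> 0"
      "(\<Sum>i\<in>I - {i0}. scale (c' i) (u i)) = 0"
      using insert.IH[of "I - {i0}" u] insert.prems by auto
    define c where "c j = (if j = i0 then - (\<Sum>k\<in>I - {i0}. c' k * a k) else c' j * a i0)" for j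
    have "(\<Sum>i\<in>I. scale (c i) (v i))
        = scale (c i0) (v i0) + (\<Sum>i\<in>I - {i0}. scale (c i) (v i))"
      using insert.prems i0 by (simp add: sum.remove)
    also have "\<dots> = (\<Sum>i\<in>I - {i0}. scale (c' i * a i0) (v i) - scale (c' i * a i) (v i0))"
      by (simp add: c_def scale_sum_left sum_subtractf)
    also have "\<dots> = (\<Sum>i\<in>I - {i0}. scale (c' i) (u i))"
      by (simp add: u_def scale_right_diff_distrib mult.commute)
    finally have "(\<Sum>i\<in>I. scale (c i) (v i)) = 0" using c' by simp
    moreover have "\<exists>i\<in>I. c i \<noteq> 0" using c' i0 by (auto simp: c_def)
    ultimately show ?thesis by blast
  qed
qed

lemma ex_last_nonzero:
  fixes c :: "nat \<Rightarrow> 'a::zero"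
  assumes "\<exists>i\<le>n. c i \<noteq> 0"
  obtains j where "j \<le> n" "c j \<noteq> 0" "\<And>i. j < i \<Longrightarrow> i \<le> n \<Longrightarrow> c i = 0"
proof -
  define j where "j = Max {i. i \<le> n \<and> c i \<noteq> 0}"
  have fin: "finite {i. i \<le> n \<and> c i \<noteq> 0}" by simp
  have "j \<le> n" "c j \<noteq> 0"
    using Max_in[OF fin] assms by (auto simp: j_def)
  moreover have "c i = 0" if "j < i" "i \<le> n" for i
    using that unfolding j_def by (metis (mono_tags, lifting) Max_ge fin leD mem_Collect_eq)
  ultimately show ?thesis using that by blast
qed

lemma poly_of_nat_eventually_nonzero:
  fixes p :: "'a::{idom, ring_char_0} poly"
  assumes "p \<noteq> 0"
  obtains N where "\<And>n. N \<le> n \<Longrightarrow> poly p (of_nat n) \<noteq> 0"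
proof -
  have "finite (of_nat -` {x. poly p x = 0} :: nat set)"
    using poly_roots_finite[OF assms] by (rule finite_vimageI) (simp add: inj_on_def)
  then obtain N where "\<And>n. poly p (of_nat n) = 0 \<Longrightarrow> n < N"
    unfolding finite_nat_set_iff_bounded by auto
  then show ?thesis using that by (meson leD)
qed

lemma sum_smult_graded_nonzero:
  fixes Q :: "nat \<Rightarrow> 'a::idom poly"
  assumes "\<And>i. i \<le> r \<Longrightarrow> Q i \<noteq> 0 \<and> degree (Q i) = i" and "\<exists>i\<le>r. a i \<noteq> 0"
  shows "(\<Sum>i\<le>r. smult (a i) (Q i)) \<noteq> 0"
proof -
  obtain j where j: "j \<le> r" "a j \<noteq> 0" and above: "\<And>i. j < i \<Longrightarrow> i \<le> r \<Longrightarrow> a i = 0"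
    using ex_last_nonzero[OF assms(2)] by blast
  have "coeff (\<Sum>i\<le>r. smult (a i) (Q i)) j = (\<Sum>i\<in>{j}. a i * coeff (Q i) j)"
    unfolding coeff_sum coeff_smult
  proof (rule sum.mono_neutral_right)
    show "\<forall>i\<in>{..r} - {j}. a i * coeff (Q i) j = 0"
      using above assms(1) by (metis DiffE coeff_eq_0 atMost_iff insertI1 linorder_neqE_nat mult_eq_0_iff)
  qed (use j in auto)
  also have "\<dots> \<noteq> 0" using j assms(1)[of j] by (simp, metis leading_coeff_0_iff)
  finally show ?thesis by auto
qed

lemma poly_pochhammer_shift:
  "poly (pochhammer [:1, 1:] i) x = pochhammer (x + 1 :: 'a::comm_ring_1) i"
  by (induction i) (simp_all add: pochhammer_rec' algebra_simps)

lemma pochhammer_shift_poly_degree: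
  "pochhammer [:1, 1 :: 'a::idom:] i \<noteq> 0 \<and> degree (pochhammer [:1, 1 :: 'a:] i) = i"
proof (induction i)
  case (Suc i)
  have "pochhammer [:1, 1:] (Suc i) = [:1 + of_nat i, 1 :: 'a:] * pochhammer [:1, 1:] i"
    by (simp add: pochhammer_rec' of_nat_poly)
  then show ?case using Suc by (auto simp: degree_mult_eq simp del: mult_pCons_left)
qed simp

definition formal_adjoint :: "nat \<Rightarrow> (nat \<Rightarrow> 'a::idom poly) \<Rightarrow> 'a poly \<Rightarrow> 'a poly" where
  "formal_adjoint r c q = (\<Sum>i\<le>r. smult ((-1) ^ i) ((pderiv ^^ i) (q * c i)))"

lemma coeff_formal_adjoint_monom:
  "coeff (formal_adjoint r c (monom 1 s)) k =
    (\<Sum>i\<le>r. (-1) ^ i * pochhammer (of_nat (Suc k)) i *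
      (if k + i < s then 0 else coeff (c i) (k + i - s)))"
  unfolding formal_adjoint_def coeff_sum
  by (simp add: coeff_higher_pderiv coeff_monom_mult mult.assoc, rule sum.cong, simp_all)

lemma formal_adjoint_large_degrees:
  fixes c :: "nat \<Rightarrow> 'a::{idom, ring_char_0} poly"
  assumes "c r \<noteq> 0"
  obtains N
  where "\<And>n. N \<le> n \<Longrightarrow> \<exists>q. formal_adjoint r c q \<noteq> 0 \<and> degree (formal_adjoint r c q) = n"
proof -
  define A where "A = {i. i \<le> r \<and> c i \<noteq> 0}"
  define E where "E = Max ((\<lambda>i. degree (c i) + r - i) ` A)"
  have A: "finite A" "A \<noteq> {}" using assms by (auto simp: A_def)
  have E_ge: "degree (c i) + r \<le> E + i" if "i \<le> r" "c i \<noteq> 0" for i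
  proof -
    have "degree (c i) + r - i \<le> E"
      unfolding E_def using A(1) that by (intro Max_ge) (auto simp: A_def)
    then show ?thesis using \<open>i \<le> r\<close> by linarith
  qed
  have "E \<in> (\<lambda>i. degree (c i) + r - i) ` A"
    unfolding E_def using A by (intro Max_in) auto
  then obtain i0 where i0: "i0 \<le> r" "c i0 \<noteq> 0" "degree (c i0) + r = E + i0"
    by (auto simp: A_def)
  (* E - r is the largest value of deg c_i - i, and Phi is the polynomial such that the
     coefficient of x^n in formal_adjoint r c (x^(n + r - E)) is Phi(n). *)
  define e where "e i = coeff (c i) (E + i - r)" for i
  define Phi where "Phi = (\<Sum>i\<le>r. smult ((-1) ^ i * e i) (pochhammer [:1, 1:] i))"
  have "E + i0 - r = degree (c i0)" using i0(3) by linarith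
  then have "e i0 \<noteq> 0" using i0(2) by (simp add: e_def)
  then have "Phi \<noteq> 0"
    unfolding Phi_def using i0 pochhammer_shift_poly_degree
    by (intro sum_smult_graded_nonzero) auto
  then obtain N0 where N0: "\<And>n. N0 \<le> n \<Longrightarrow> poly Phi (of_nat n) \<noteq> 0"
    using poly_of_nat_eventually_nonzero by blast
  show ?thesis
  proof (rule that)
    fix n assume n: "max N0 E \<le> n"
    define q where "q = formal_adjoint r c (monom 1 (n + r - E))"
    have "coeff q n = poly Phi (of_nat n)"
      unfolding q_def coeff_formal_adjoint_monom Phi_def poly_sum
    proof (intro sum.cong refl)
      fix i assume "i \<in> {..r}"
      then show "(-1) ^ i * pochhammer (of_nat (Suc n)) i *
          (if n + i < n + r - E then 0 else coeff (c i) (n + i - (n + r - E)))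
        = poly (smult ((-1) ^ i * e i) (pochhammer [:1, 1:] i)) (of_nat n)"
        using E_ge[of i] n
        by (cases "c i = 0") (auto simp: e_def poly_pochhammer_shift add.commute mult.commute)
    qed
    then have "coeff q n \<noteq> 0" using N0 n by simp
    moreover have "coeff q m = 0" if "n < m" for m
      unfolding q_def coeff_formal_adjoint_monom
    proof (intro sum.neutral ballI)
      fix i assume "i \<in> {..r}"
      then show "(-1) ^ i * pochhammer (of_nat (Suc m)) i *
          (if m + i < n + r - E then 0 else coeff (c i) (m + i - (n + r - E))) = 0"
        using E_ge[of i] n that by (cases "c i = 0") (auto intro!: coeff_eq_0)
    qed
    ultimately have "q \<noteq> 0" "degree q = n"
      by (auto intro: le_antisym le_degree degree_le)
    then show "\<exists>q. formal_adjoint r c q \<noteq> 0 \<and> degree (formal_adjoint r c q) = n"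
      unfolding q_def by blast
  qed
qed

lemma poly_in_subspace_if_all_degrees:
  fixes V :: "'a::field poly set"
  assumes add: "\<And>p q. p \<in> V \<Longrightarrow> q \<in> V \<Longrightarrow> p + q \<in> V"
    and smult: "\<And>a p. p \<in> V \<Longrightarrow> smult a p \<in> V"
    and low: "\<And>k. k < N \<Longrightarrow> monom 1 k \<in> V"
    and high: "\<And>n. N \<le> n \<Longrightarrow> \<exists>q\<in>V. q \<noteq> 0 \<and> degree q = n"
  shows "p \<in> V"
proof (induction "degree p" arbitrary: p rule: less_induct)
  case less
  show ?case
  proof (cases "degree p < N")
    case True
    have "(\<Sum>i\<le>k. smult (coeff p i) (monom 1 i)) \<in> V" if "k \<le> degree p" for k
      using that
    proof (induction k)
      case 0
      then show ?case using smult[OF low[of 0]] True by simp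
    next
      case (Suc k)
      then show ?case using True by (simp add: add smult low)
    qed
    from this[of "degree p"] show ?thesis by (simp add: smult_monom poly_as_sum_of_monoms)
  next
    case False
    then obtain q where q: "q \<in> V" "q \<noteq> 0" "degree q = degree p"
      using high by (meson not_le)
    define a where "a = lead_coeff p / lead_coeff q"
    define p' where "p' = p - smult a q"
    have p: "p = p' + smult a q" by (simp add: p'_def)
    show ?thesis
    proof (cases "p' = 0")
      case True
      then show ?thesis using p q smult by simp
    next
      case False
      have "degree p' < degree p"
        using False q leading_coeff_neq_0[OF \<open>q \<noteq> 0\<close>] by (intro degree_less_if_less_eqI)
          (simp_all add: p'_def a_def degree_diff_le degree_smult_le)
      then show ?thesis using less p q add smult by metis
    qed
  qed
qed

section \<open>Power series as a module over polynomials\<close>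

lemma fps_integral0_fps_of_poly:
  fixes p :: "'a::field_char_0 poly"
  shows "\<exists>q. fps_integral0 (fps_of_poly p) = fps_of_poly q"
proof
  show "fps_integral0 (fps_of_poly p) =
    fps_of_poly (truncate_fps (degree p + 2) (fps_integral0 (fps_of_poly p)))"
    by (rule fps_ext) (auto simp: fps_integral_def coeff_eq_0)
qed

definition poly_scale :: "'a::comm_ring_1 poly \<Rightarrow> 'a fps \<Rightarrow> 'a fps" where
  "poly_scale p h = fps_of_poly p * h"

interpretation poly_scale: module poly_scale
  by unfold_locales (simp_all add: poly_scale_def fps_of_poly_add fps_of_poly_mult algebra_simps)

lemma fps_const_mult_in_poly_scale_span:
  "h \<in> poly_scale.span S \<Longrightarrow> fps_const c * h \<in> poly_scale.span S"
  using poly_scale.span_scale[of h S "[:c:]"] by (simp add: poly_scale_def fps_of_poly_const)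

lemma fps_const_in_poly_scale_span: "1 \<in> S \<Longrightarrow> fps_const c \<in> poly_scale.span S"
  using fps_const_mult_in_poly_scale_span[OF poly_scale.span_base, of 1 S c] by simp

lemma fps_integral0_mult_higher_deriv:
  fixes u :: "'a::field_char_0 poly"
  shows "fps_integral0 (fps_of_poly u * (fps_deriv ^^ i) g)
      - fps_const ((-1) ^ i) * fps_integral0 (fps_of_poly ((pderiv ^^ i) u) * g)
    \<in> poly_scale.span ((\<lambda>j. (fps_deriv ^^ j) g) ` {..<i} \<union> {1})"
proof (induction i arbitrary: u)
  case 0
  then show ?case by (simp add: poly_scale.span_zero)
next
  case (Suc i)
  let ?S = "(\<lambda>j. (fps_deriv ^^ j) g) ` {..<Suc i} \<union> {1}"
  define G where "G = (fps_deriv ^^ i) g"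
  define R where "R = fps_integral0 (fps_of_poly (pderiv u) * G)
    - fps_const ((-1) ^ i) * fps_integral0 (fps_of_poly ((pderiv ^^ i) (pderiv u)) * g)"
  have "R \<in> poly_scale.span ((\<lambda>j. (fps_deriv ^^ j) g) ` {..<i} \<union> {1})"
    using Suc.IH by (simp add: R_def G_def)
  also have "\<dots> \<subseteq> poly_scale.span ?S"
    by (rule poly_scale.span_mono) auto
  finally have R: "R \<in> poly_scale.span ?S" .
  have "fps_integral0 (fps_of_poly u * fps_deriv G)
      = poly_scale u G - fps_const (coeff u 0 * G $ 0) - fps_integral0 (fps_of_poly (pderiv u) * G)"
  proof -
    have "fps_of_poly u * fps_deriv G = fps_deriv (fps_of_poly u * G) - fps_of_poly (pderiv u) * G"
      by (simp add: fps_of_poly_pderiv algebra_simps)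
    then have "fps_integral0 (fps_of_poly u * fps_deriv G)
        = fps_integral0 (fps_deriv (fps_of_poly u * G)) - fps_integral0 (fps_of_poly (pderiv u) * G)"
      by (simp only: fps_integral0_sub)
    then show ?thesis by (simp only: fps_integral0_deriv poly_scale_def) simp
  qed
  then have "fps_integral0 (fps_of_poly u * (fps_deriv ^^ Suc i) g)
      - fps_const ((-1) ^ Suc i) * fps_integral0 (fps_of_poly ((pderiv ^^ Suc i) u) * g)
    = poly_scale u G - fps_const (coeff u 0 * G $ 0) - R"
    by (simp add: R_def G_def funpow_swap1 fps_const_neg[symmetric] del: fps_const_neg)
  also have "\<dots> \<in> poly_scale.span ?S"
    by (intro poly_scale.span_diff R poly_scale.span_scale poly_scale.span_base
        fps_const_in_poly_scale_span) (auto simp: G_def)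
  finally show ?case .
qed

lemma funpow_fps_deriv_fps_integral0:
  fixes h :: "'a::field_char_0 fps"
  shows "i \<le> m \<Longrightarrow> (fps_deriv ^^ i) ((fps_integral0 ^^ m) h) = (fps_integral0 ^^ (m - i)) h"
proof (induction i)
  case (Suc i)
  then have "m - i = Suc (m - Suc i)" by simp
  then show ?case using Suc by (simp add: fps_deriv_fps_integral)
qed simp

section \<open>Differential operators with polynomial coefficients\<close>

definition apply_diffop :: "nat \<Rightarrow> (nat \<Rightarrow> 'a::comm_ring_1 poly) \<Rightarrow> 'a fps \<Rightarrow> 'a fps" where
  "apply_diffop r c h = (\<Sum>i\<le>r. fps_of_poly (c i) * (fps_deriv ^^ i) h)"

lemma fps_to_fls_sum: "fps_to_fls (sum g A) = (\<Sum>x\<in>A. fps_to_fls (g x))"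
  by (induction A rule: infinite_finite_induct) auto

lemma rat_fls_mult_1: "rat_fls (p * q) 1 = rat_fls p 1 * rat_fls q 1"
  by (simp add: rat_fls_def fps_of_poly_mult fls_times_fps_to_fls)

lemma fps_to_fls_apply_diffop:
  "fps_to_fls (apply_diffop r c h) = (\<Sum>i\<le>r. rat_fls (c i) 1 * fps_to_fls ((fps_deriv ^^ i) h))"
  by (simp add: apply_diffop_def rat_fls_def fps_to_fls_sum fls_times_fps_to_fls)

lemma has_annihilator_of_order_iff:
  "has_annihilator_of_order h r \<longleftrightarrow> (\<exists>c. c r \<noteq> 0 \<and> apply_diffop r c h = 0)"
proof
  assume "has_annihilator_of_order h r"
  then obtain p q where q: "\<forall>i\<le>r. q i \<noteq> 0" and "p r \<noteq> 0"
    and rel: "(\<Sum>i\<le>r. rat_fls (p i) (q i) * fps_to_fls ((fps_deriv ^^ i) h)) = 0"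
    unfolding has_annihilator_of_order_def by blast
  define Q where "Q = (\<Prod>k\<le>r. q k)"
  define c where "c i = p i * (\<Prod>k\<in>{..r} - {i}. q k)" for i
  have c: "rat_fls (c i) 1 = rat_fls Q 1 * rat_fls (p i) (q i)" if "i \<le> r" for i
  proof -
    have "Q = q i * (\<Prod>k\<in>{..r} - {i}. q k)"
      using that by (simp add: Q_def prod.remove)
    moreover have "rat_fls (q i) 1 \<noteq> 0"
      using q that by (simp add: rat_fls_def fps_of_poly_eq_iff[of _ 0, simplified])
    ultimately show ?thesis
      by (simp add: c_def rat_fls_mult_1) (simp add: rat_fls_def)
  qed
  have "fps_to_fls (apply_diffop r c h)
      = rat_fls Q 1 * (\<Sum>i\<le>r. rat_fls (p i) (q i) * fps_to_fls ((fps_deriv ^^ i) h))"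
    by (simp add: fps_to_fls_apply_diffop sum_distrib_left c mult.assoc)
  then have "apply_diffop r c h = 0" by (simp add: rel)
  moreover have "c r \<noteq> 0" using \<open>p r \<noteq> 0\<close> q by (simp add: c_def)
  ultimately show "\<exists>c. c r \<noteq> 0 \<and> apply_diffop r c h = 0" by blast
next
  assume "\<exists>c. c r \<noteq> 0 \<and> apply_diffop r c h = 0"
  then obtain c where "c r \<noteq> 0" "apply_diffop r c h = 0" by blast
  then show "has_annihilator_of_order h r"
    unfolding has_annihilator_of_order_def
    by (intro exI[of _ c] exI[of _ "\<lambda>_. 1"]) (simp add: fps_to_fls_apply_diffop[symmetric])
qed

lemma dfinite_order_le_if_nontrivial_relation:
  assumes "apply_diffop n c h = 0" and "\<exists>i\<le>n. c i \<noteq> 0"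
  shows "dfinite_order h \<le> n"
proof -
  obtain j where "j \<le> n" "c j \<noteq> 0" and above: "\<And>i. j < i \<Longrightarrow> i \<le> n \<Longrightarrow> c i = 0"
    using ex_last_nonzero[OF assms(2)] by blast
  then have "apply_diffop j c h = apply_diffop n c h"
    unfolding apply_diffop_def using \<open>j \<le> n\<close> above by (intro sum.mono_neutral_left) auto
  then have "has_annihilator_of_order h j"
    using assms(1) \<open>c j \<noteq> 0\<close> by (auto simp: has_annihilator_of_order_iff)
  then show ?thesis
    using \<open>j \<le> n\<close> unfolding dfinite_order_def by (auto intro: Least_le order_trans)
qed

lemma dfinite_order_annihilator:
  assumes "dfinite h"
  obtains c where "c (dfinite_order h) \<noteq> 0" "apply_diffop (dfinite_order h) c h = 0"
  using assms LeastI_ex[of "has_annihilator_of_order h"]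
  unfolding dfinite_def dfinite_order_def has_annihilator_of_order_iff by blast

lemma apply_diffop_fps_integral0:
  fixes h :: "'a::field_char_0 fps"
  shows "apply_diffop (Suc r) (case_nat 0 c) (fps_integral0 h) = apply_diffop r c h"
  unfolding apply_diffop_def sum.atMost_Suc_shift
  by (simp add: funpow_Suc_right fps_deriv_fps_integral del: funpow.simps)

lemma apply_diffop_shift:
  "apply_diffop s c h
    = fps_of_poly (c 0) * h + apply_diffop s (\<lambda>i. if i < s then c (Suc i) else 0) (fps_deriv h)"
proof (cases s)
  case (Suc t)
  have "apply_diffop (Suc t) c h
      = fps_of_poly (c 0) * h + (\<Sum>i\<le>t. fps_of_poly (c (Suc i)) * (fps_deriv ^^ Suc i) h)"
    unfolding apply_diffop_def sum.atMost_Suc_shift by simp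
  then show ?thesis using Suc by (simp add: apply_diffop_def funpow_swap1)
qed (simp add: apply_diffop_def)

lemma fps_deriv_apply_diffop:
  "fps_deriv (apply_diffop s c h)
    = apply_diffop s (\<lambda>i. pderiv (c i)) h + apply_diffop s c (fps_deriv h)"
  by (simp add: apply_diffop_def fps_deriv_sum fps_of_poly_pderiv sum.distrib funpow_swap1)

lemma dfinite_order_fps_deriv_le:
  assumes "dfinite h"
  shows "dfinite_order (fps_deriv h) \<le> dfinite_order h"
proof -
  define s where "s = dfinite_order h"
  obtain c where "c s \<noteq> 0" and ann: "apply_diffop s c h = 0"
    using dfinite_order_annihilator[OF assms] by (auto simp: s_def)
  have "\<exists>e. (\<exists>i\<le>s. e i \<noteq> 0) \<and> apply_diffop s e (fps_deriv h) = 0"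
  proof (cases "c 0 = 0")
    case True
    define e where "e = (\<lambda>i. if i < s then c (Suc i) else 0)"
    have "0 < s" using True \<open>c s \<noteq> 0\<close> by (metis gr0I)
    then have "e (s - 1) \<noteq> 0" using \<open>c s \<noteq> 0\<close> by (simp add: e_def)
    moreover have "apply_diffop s e (fps_deriv h) = 0"
      using ann True by (simp add: apply_diffop_shift[of s c h] e_def)
    ultimately show ?thesis by (meson diff_le_self)
  next
    case False
    (* c 0 * (L h)' - (c 0)' * L h has no term in h itself, so it is an operator applied to h'. *)
    define a where "a = c 0"
    define d where "d i = a * pderiv (c i) - pderiv a * c i" for i
    define e where "e = (\<lambda>i. a * c i + (if i < s then d (Suc i) else 0))"
    have "0 = fps_of_poly a * fps_deriv (apply_diffop s c h)
        - fps_of_poly (pderiv a) * apply_diffop s c h"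
      using ann by simp
    also have "\<dots> = apply_diffop s d h + apply_diffop s (\<lambda>i. a * c i) (fps_deriv h)"
      unfolding fps_deriv_apply_diffop
      by (simp add: apply_diffop_def d_def sum_distrib_left sum.distrib
          sum_subtractf fps_of_poly_mult fps_of_poly_diff algebra_simps)
    also have "\<dots> = apply_diffop s e (fps_deriv h)"
      unfolding apply_diffop_shift[of s d h]
      by (simp add: d_def a_def e_def apply_diffop_def sum.distrib fps_of_poly_add distrib_right)
    finally have "apply_diffop s e (fps_deriv h) = 0" ..
    moreover have "e s \<noteq> 0" using False \<open>c s \<noteq> 0\<close> by (simp add: e_def a_def)
    ultimately show ?thesis by blast
  qed
  then show ?thesis
    using dfinite_order_le_if_nontrivial_relation by (auto simp: s_def)
qed

section \<open>The integrals of an annihilated series span a finitely generated module\<close>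

locale annihilated_fps =
  fixes f :: "'a::field_char_0 fps" and r :: nat and l :: "nat \<Rightarrow> 'a poly"
  assumes leading_nonzero: "l r \<noteq> 0" and annihilates: "apply_diffop r l f = 0"
begin

definition int_mult :: "'a poly \<Rightarrow> 'a fps" where
  "int_mult p = fps_integral0 (fps_of_poly p * f)"

(* f^(r) is redundant, but including it makes f a generator even when r = 0. *)
definition generators :: "nat \<Rightarrow> 'a fps set" where
  "generators N =
    (\<lambda>j. (fps_deriv ^^ j) f) ` {..r} \<union> {1} \<union> (\<lambda>k. int_mult (monom 1 k)) ` {..<N}"

lemma finite_generators: "finite (generators N)"
  by (simp add: generators_def)

lemma int_mult_add: "int_mult (p + q) = int_mult p + int_mult q"
  by (simp add: int_mult_def fps_of_poly_add distrib_right fps_integral0_add)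

lemma int_mult_smult: "int_mult (smult a p) = fps_const a * int_mult p"
  by (simp add: int_mult_def fps_of_poly_smult mult.assoc fps_integral0_fps_const_mult_left)

lemma int_mult_formal_adjoint_in_span:
  "int_mult (formal_adjoint r l q) \<in> poly_scale.span (generators N)"
proof -
  define R where "R i = fps_integral0 (fps_of_poly (q * l i) * (fps_deriv ^^ i) f)
    - fps_const ((-1) ^ i) * int_mult ((pderiv ^^ i) (q * l i))" for i
  have R: "R i \<in> poly_scale.span (generators N)" if "i \<le> r" for i
  proof -
    have "R i \<in> poly_scale.span ((\<lambda>j. (fps_deriv ^^ j) f) ` {..<i} \<union> {1})"
      unfolding R_def int_mult_def by (rule fps_integral0_mult_higher_deriv)
    also have "\<dots> \<subseteq> poly_scale.span (generators N)"
      using that by (intro poly_scale.span_mono) (auto simp: generators_def)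
    finally show ?thesis .
  qed
  (* The R i are the integration-by-parts remainders of the terms of int(q L f) = 0. *)
  have "(\<Sum>i\<le>r. fps_integral0 (fps_of_poly (q * l i) * (fps_deriv ^^ i) f))
      = fps_integral0 (fps_of_poly q * apply_diffop r l f)"
    by (simp add: apply_diffop_def fps_integral0_sum sum_distrib_left fps_of_poly_mult mult.assoc)
  also have "\<dots> = 0" by (simp add: annihilates fps_integral0_zero)
  finally have "int_mult (formal_adjoint r l q) = - (\<Sum>i\<le>r. R i)"
    by (simp add: formal_adjoint_def int_mult_def R_def fps_of_poly_sum fps_of_poly_smult
        sum_distrib_right fps_integral0_sum mult.assoc fps_integral0_fps_const_mult_left sum_subtractf)
  also have "\<dots> \<in> poly_scale.span (generators N)"
    using R by (intro poly_scale.span_neg poly_scale.span_sum) auto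
  finally show ?thesis .
qed

lemma int_mult_in_span:
  obtains N where "\<And>p. int_mult p \<in> poly_scale.span (generators N)"
proof -
  obtain N where N: "\<And>n. N \<le> n \<Longrightarrow> \<exists>q. formal_adjoint r l q \<noteq> 0 \<and>
      degree (formal_adjoint r l q) = n"
    using formal_adjoint_large_degrees[of l r] leading_nonzero by blast
  define V where "V = {p. int_mult p \<in> poly_scale.span (generators N)}"
  have "p \<in> V" for p
  proof (rule poly_in_subspace_if_all_degrees[where N = N])
    fix n assume "N \<le> n"
    then obtain q where "formal_adjoint r l q \<noteq> 0" "degree (formal_adjoint r l q) = n"
      using N by blast
    then show "\<exists>q\<in>V. q \<noteq> 0 \<and> degree q = n"
      using int_mult_formal_adjoint_in_span unfolding V_def by blast
  qed (auto simp: V_def int_mult_add int_mult_smult poly_scale.span_add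
      fps_const_mult_in_poly_scale_span intro: poly_scale.span_base simp: generators_def)
  then show ?thesis using that by (auto simp: V_def)
qed

lemma fps_integral0_poly_scale_generator_in_span:
  assumes int_mult: "\<And>p. int_mult p \<in> poly_scale.span (generators N)"
    and "x \<in> generators N"
  shows "fps_integral0 (poly_scale c x) \<in> poly_scale.span (generators N)"
proof -
  obtain C where C: "fps_integral0 (fps_of_poly c) = fps_of_poly C"
    using fps_integral0_fps_of_poly by blast
  consider (deriv) j where "j \<le> r" "x = (fps_deriv ^^ j) f" | (one) "x = 1"
    | (int) k where "x = int_mult (monom 1 k)"
    using assms(2) by (auto simp: generators_def)
  then show ?thesis
  proof cases
    case (deriv j)
    define R where "R = fps_integral0 (fps_of_poly c * (fps_deriv ^^ j) f)
      - fps_const ((-1) ^ j) * int_mult ((pderiv ^^ j) c)"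
    have "R \<in> poly_scale.span ((\<lambda>j. (fps_deriv ^^ j) f) ` {..<j} \<union> {1})"
      unfolding R_def int_mult_def by (rule fps_integral0_mult_higher_deriv)
    also have "\<dots> \<subseteq> poly_scale.span (generators N)"
      using deriv by (intro poly_scale.span_mono) (auto simp: generators_def)
    finally have "R + fps_const ((-1) ^ j) * int_mult ((pderiv ^^ j) c)
        \<in> poly_scale.span (generators N)"
      using int_mult by (intro poly_scale.span_add fps_const_mult_in_poly_scale_span)
    then show ?thesis using deriv by (simp add: R_def poly_scale_def)
  next
    case one
    have "fps_integral0 (poly_scale c x) = poly_scale C 1"
      using one C by (simp add: poly_scale_def)
    then show ?thesis
      by (simp add: poly_scale.span_scale poly_scale.span_base generators_def)
  next
    case (int k)
    have "fps_integral0 (poly_scale c x) = poly_scale C x - int_mult (C * monom 1 k)"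
      using int C fps_integral0_by_parts[of x "fps_of_poly c"]
      by (simp add: poly_scale_def int_mult_def fps_deriv_fps_integral fps_of_poly_mult
          mult_ac)
    then show ?thesis using int_mult assms(2)
      by (simp add: poly_scale.span_diff poly_scale.span_scale poly_scale.span_base)
  qed
qed

lemma fps_integral0_in_span:
  assumes "\<And>p. int_mult p \<in> poly_scale.span (generators N)"
    and "h \<in> poly_scale.span (generators N)"
  shows "fps_integral0 h \<in> poly_scale.span (generators N)"
  using assms(2)
proof (induction rule: poly_scale.span_induct_alt)
  case base
  then show ?case by (simp add: fps_integral0_zero poly_scale.span_zero)
next
  case (step c x y)
  then show ?case
    using fps_integral0_poly_scale_generator_in_span[OF assms(1) step(1)]
    by (simp add: fps_integral0_add poly_scale.span_add)
qed

lemma fps_integral0_funpow_in_span: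
  obtains N where "\<And>m. (fps_integral0 ^^ m) f \<in> poly_scale.span (generators N)"
proof -
  obtain N where N: "\<And>p. int_mult p \<in> poly_scale.span (generators N)"
    using int_mult_in_span by blast
  have "f \<in> poly_scale.span (generators N)"
    by (rule poly_scale.span_base) (force simp: generators_def)
  then have "(fps_integral0 ^^ m) f \<in> poly_scale.span (generators N)" for m
    by (induction m) (simp_all add: fps_integral0_in_span[OF N])
  then show ?thesis using that by blast
qed

end

section \<open>Eventual stability\<close>

lemma fps_int_eq_fps_integral0: "fps_int h = fps_integral0 h"
  by (rule fps_ext) (simp add: fps_int_def fps_integral_def field_simps)

lemma fps_deriv_fps_int [simp]: "fps_deriv (fps_int h) = h"
  by (simp add: fps_int_eq_fps_integral0 fps_deriv_fps_integral)

lemma dfinite_fps_int: "dfinite h \<Longrightarrow> dfinite (fps_int h)"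
  unfolding dfinite_def has_annihilator_of_order_iff fps_int_eq_fps_integral0
  by (metis apply_diffop_fps_integral0 nat.case(2))

lemma dfinite_fps_int_funpow: "dfinite h \<Longrightarrow> dfinite ((fps_int ^^ m) h)"
  by (induction m) (simp_all add: dfinite_fps_int)

lemma mono_dfinite_order_fps_int_funpow:
  assumes "dfinite f"
  shows "mono (\<lambda>m. dfinite_order ((fps_int ^^ m) f))"
  unfolding mono_iff_le_Suc
proof
  fix m
  show "dfinite_order ((fps_int ^^ m) f) \<le> dfinite_order ((fps_int ^^ Suc m) f)"
    using dfinite_order_fps_deriv_le[OF dfinite_fps_int_funpow[OF assms, of "Suc m"]] by simp
qed

lemma dfinite_order_fps_int_funpow_bounded:
  assumes "dfinite f"
  obtains n where "\<And>m. dfinite_order ((fps_int ^^ m) f) \<le> n"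
proof -
  have fps_int: "fps_int = (\<lambda>h. fps_integral0 h)"
    using fps_int_eq_fps_integral0 by blast
  obtain l where "l (dfinite_order f) \<noteq> 0" "apply_diffop (dfinite_order f) l f = 0"
    using dfinite_order_annihilator[OF assms] by blast
  then interpret annihilated_fps f "dfinite_order f" l
    by unfold_locales
  obtain N where N: "\<And>m. (fps_integral0 ^^ m) f \<in> poly_scale.span (generators N)"
    using fps_integral0_funpow_in_span by blast
  define n where "n = card (generators N)"
  have large: "dfinite_order ((fps_int ^^ m) f) \<le> n" if "n \<le> m" for m
  proof -
    have "\<forall>i\<in>{..n}. (fps_deriv ^^ i) ((fps_integral0 ^^ m) f) \<in> poly_scale.span (generators N)"
      using that N by (simp add: funpow_fps_deriv_fps_integral0)
    then obtain c where nontrivial: "\<exists>i\<in>{..n}. c i \<noteq> 0"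
      and "(\<Sum>i\<le>n. poly_scale (c i) ((fps_deriv ^^ i) ((fps_integral0 ^^ m) f))) = 0"
      using module_span_card_dependent[OF poly_scale.module_axioms finite_generators[of N],
          of "{..n}" "\<lambda>i. (fps_deriv ^^ i) ((fps_integral0 ^^ m) f)"]
      by (auto simp: n_def)
    then have "apply_diffop n c ((fps_int ^^ m) f) = 0"
      by (simp add: fps_int apply_diffop_def poly_scale_def)
    then show ?thesis
      using nontrivial by (intro dfinite_order_le_if_nontrivial_relation) auto
  qed
  have "dfinite_order ((fps_int ^^ m) f) \<le> n" for m
    using monoD[OF mono_dfinite_order_fps_int_funpow[OF assms], of m "m + n"] large[of "m + n"]
    by simp
  then show ?thesis using that by blast
qed

lemma mono_bounded_nat_eventually_constant:
  fixes d :: "nat \<Rightarrow> nat"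
  assumes "mono d" and "\<And>m. d m \<le> n"
  obtains M where "\<And>i. d (M + i) = d M"
proof -
  have "finite (range d)" using assms(2) by (meson finite_atMost finite_subset image_subsetI atMost_iff)
  then obtain M where M: "d M = Max (range d)"
    using Max_in by (metis empty_not_UNIV image_is_empty imageE)
  have "d (M + i) = d M" for i
    using monoD[OF assms(1), of M "M + i"] Max_ge[OF \<open>finite (range d)\<close>, of "d (M + i)"] M
    by simp
  then show ?thesis using that by blast
qed

lemma stable_if_fps_int_orders_constant:
  assumes "dfinite h" and "\<And>i. dfinite_order ((fps_int ^^ i) h) = dfinite_order h"
  shows "stable h"
  unfolding stable_def
  using assms dfinite_fps_int_funpow[OF assms(1)]
  by (intro conjI exI[of _ "\<lambda>i. (fps_int ^^ i) h"]) auto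

theorem theorem4p5:
  fixes f :: "complex fps"
  assumes "dfinite f"
  shows "\<exists>m::nat. stable ((fps_int ^^ m) f)"
proof -
  define d where "d m = dfinite_order ((fps_int ^^ m) f)" for m
  obtain n where "\<And>m. d m \<le> n"
    using dfinite_order_fps_int_funpow_bounded[OF assms] by (auto simp: d_def)
  then obtain M where M: "\<And>i. d (M + i) = d M"
    using mono_bounded_nat_eventually_constant mono_dfinite_order_fps_int_funpow[OF assms]
    unfolding d_def by blast
  have "(fps_int ^^ i) ((fps_int ^^ M) f) = (fps_int ^^ (M + i)) f" for i
    by (simp add: funpow_add add.commute[of M])
  then have "stable ((fps_int ^^ M) f)"
    using M dfinite_fps_int_funpow[OF assms]
    by (intro stable_if_fps_int_orders_constant) (simp_all add: d_def)
  then show ?thesis ..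
qed

end
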